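(* Let $b>0$, $\sigma>0$, $\alpha,\beta>-1$ and $\mu,\eta\in\mathbb{R}$. Define on $\Lambda=[0,b]$ \[ {}^1\mathcal{J}_n(x)=x^{\sigma(\beta-\eta-\mu)}P_n^{(\alpha,\beta)}\!\Big(2\big(\tfrac{x}{b}\big)^\sigma-1\Big),\qquad {}^2\mathcal{J}_n(x)=x^{\sigma\eta}(b^\sigma-x^\sigma)^\alpha P_n^{(\alpha,\beta)}\!\Big(2\big(\tfrac{x}{b}\big)^\sigma-1\Big), \] and the weights $w_1(x)=x^{\sigma(2(\eta+\mu)-\beta)}(b^\sigma-x^\sigma)^{\alpha}$, $w_2(x)=x^{\sigma(\beta-2\eta)}(b^\sigma-x^\sigma)^{-\alpha}$. Then $\{{}^1\mathcal{J}_n\}_{n=0}^\infty$ is a complete set in $\mathbf L^2_{x^{\sigma-1}w_1}(\Lambda)$ and $\{{}^2\mathcal{J}_n\}_{n=0}^\infty$ is a complete set in $\mathbf L^2_{x^{\sigma-1}w_2}(\Lambda)$.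
   Context: $P_n^{(\alpha,\beta)}$ is the classical Jacobi polynomial. For a positive weight $\omega$ on $\Lambda=[0,b]$, $\mathbf L^2_\omega(\Lambda)=\{u:\int_\Lambda u^2\omega\,dx<\infty\}$ with norm $\|u\|_\omega=(\int_\Lambda u^2\omega\,dx)^{1/2}$. Complete means the linear span is dense in the space. *)

theory Defs
  imports "HOL-Analysis.Analysis"
begin

definition jacobiP :: "real \<Rightarrow> real \<Rightarrow> nat \<Rightarrow> real \<Rightarrow> real" where
  "jacobiP a b n x =
     (\<Sum>k=0..n. ((real n + a) gchoose (n - k)) * ((real n + b) gchoose k)
                 * ((x - 1) / 2) ^ k * ((x + 1) / 2) ^ (n - k))"

definition J1 :: "real \<Rightarrow> real \<Rightarrow> real \<Rightarrow> real \<Rightarrow> real \<Rightarrow> real \<Rightarrow> nat \<Rightarrow> real \<Rightarrow> real" where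
  "J1 b \<sigma> \<alpha> \<beta> \<mu> \<eta> n x =
     x powr (\<sigma> * (\<beta> - \<eta> - \<mu>)) * jacobiP \<alpha> \<beta> n (2 * (x / b) powr \<sigma> - 1)"

definition J2 :: "real \<Rightarrow> real \<Rightarrow> real \<Rightarrow> real \<Rightarrow> real \<Rightarrow> nat \<Rightarrow> real \<Rightarrow> real" where
  "J2 b \<sigma> \<alpha> \<beta> \<eta> n x =
     x powr (\<sigma> * \<eta>) * (b powr \<sigma> - x powr \<sigma>) powr \<alpha>
       * jacobiP \<alpha> \<beta> n (2 * (x / b) powr \<sigma> - 1)"

definition w1 :: "real \<Rightarrow> real \<Rightarrow> real \<Rightarrow> real \<Rightarrow> real \<Rightarrow> real \<Rightarrow> real \<Rightarrow> real" where
  "w1 b \<sigma> \<alpha> \<beta> \<mu> \<eta> x =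
     x powr (\<sigma> * (2 * (\<eta> + \<mu>) - \<beta>)) * (b powr \<sigma> - x powr \<sigma>) powr \<alpha>"

definition w2 :: "real \<Rightarrow> real \<Rightarrow> real \<Rightarrow> real \<Rightarrow> real \<Rightarrow> real \<Rightarrow> real" where
  "w2 b \<sigma> \<alpha> \<beta> \<eta> x =
     x powr (\<sigma> * (\<beta> - 2 * \<eta>)) * (b powr \<sigma> - x powr \<sigma>) powr (- \<alpha>)"

definition L2w :: "real \<Rightarrow> (real \<Rightarrow> real) \<Rightarrow> (real \<Rightarrow> real) set" where
  "L2w b \<omega> = {u. set_borel_measurable lborel {0..b} u \<and>
      (\<integral>\<^sup>+ x. ennreal ((u x)\<^sup>2 * \<omega> x) * indicator {0..b} x \<partial>lborel) < \<infinity>}"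

definition complete_in :: "real \<Rightarrow> (real \<Rightarrow> real) \<Rightarrow> (nat \<Rightarrow> real \<Rightarrow> real) \<Rightarrow> bool" where
  "complete_in b \<omega> \<phi> \<longleftrightarrow>
     (\<forall>n. \<phi> n \<in> L2w b \<omega>) \<and>
     (\<forall>u \<in> L2w b \<omega>. \<forall>\<epsilon>>0. \<exists>N c.
        (\<integral>\<^sup>+ x. ennreal ((u x - (\<Sum>n<N. c n * \<phi> n x))\<^sup>2 * \<omega> x) * indicator {0..b} x \<partial>lborel)
          < ennreal \<epsilon>)"

end

(* Under the substitution t = 2 (x/b)^\<sigma> - 1 both families have the form m(x) P_n(t(x)), with
   m = x^(\<sigma> (\<beta> - \<eta> - \<mu>)) resp. m = x^(\<sigma> \<eta>) (b^\<sigma> - x^\<sigma>)^\<alpha>, and in both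
   cases m^2 times the given weight is W(x) = x^(\<sigma> \<beta> + \<sigma> - 1) (b^\<sigma> - x^\<sigma>)^\<alpha>,
   which is integrable on [0, b] because \<alpha>, \<beta> > -1. Dividing by m is therefore an isometry
   onto L^2(W dx), and completeness reduces to density of the span of P_n(t(x)) in L^2(W dx).
   Since P_n has exact degree n, that span consists of all polynomials in t. Continuous functions
   are dense in L^2 of any finite Borel measure (inner and outer regularity plus Urysohn's lemma),
   and as t is continuous and injective on the compact interval [0, b], every continuous function
   of x is a uniform limit of polynomials in t (Stone-Weierstrass). *)

theory Submission
  imports Defs "HOL-Computational_Algebra.Polynomial"
begin

section \<open>Jacobi polynomials span the polynomials\<close>

definition jacobi_poly :: "real \<Rightarrow> real \<Rightarrow> nat \<Rightarrow> real poly" where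
  "jacobi_poly a b n = (\<Sum>k=0..n. smult (((real n + a) gchoose (n - k)) * ((real n + b) gchoose k))
                          ([:-1/2, 1/2:] ^ k * [:1/2, 1/2:] ^ (n - k)))"

lemma poly_jacobi_poly: "poly (jacobi_poly a b n) x = jacobiP a b n x"
  by (simp add: jacobi_poly_def jacobiP_def poly_sum mult.assoc diff_divide_distrib add_divide_distrib
      add.commute)

lemma coeff_jacobi_poly_top: "coeff (jacobi_poly a b n) n = ((2 * real n + a + b) gchoose n) / 2 ^ n"
proof -
  have linear_power: "coeff ([:c, 1/2:] ^ k) k = (1/2) ^ k" for c :: real and k
    using lead_coeff_power[of "[:c, 1/2:]" k] by (simp add: degree_power_eq)
  have top: "coeff ([:c, 1/2:] ^ k * [:d, 1/2:] ^ (n - k)) n = 1 / 2 ^ n"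
    if "k \<le> n" for c d :: real and k
    using that coeff_mult_degree_sum[of "[:c, 1/2:] ^ k" "[:d, 1/2:] ^ (n - k)"]
    by (simp add: degree_power_eq linear_power power_add[symmetric] power_one_over)
  have "coeff (jacobi_poly a b n) n
      = (\<Sum>k=0..n. ((real n + b) gchoose k) * ((real n + a) gchoose (n - k))) / 2 ^ n"
    unfolding jacobi_poly_def coeff_sum sum_divide_distrib
    by (intro sum.cong) (simp_all add: top)
  also have "\<dots> = ((2 * real n + a + b) gchoose n) / 2 ^ n"
    by (subst gbinomial_Vandermonde) (simp add: algebra_simps)
  finally show ?thesis .
qed

lemma degree_jacobi_poly_le: "degree (jacobi_poly a b n) \<le> n"
  unfolding jacobi_poly_def
  by (intro degree_sum_le order.trans[OF degree_smult_le] order.trans[OF degree_mult_le]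
      order.trans[OF add_mono[OF degree_power_le degree_power_le]]) auto

lemma coeff_jacobi_poly_top_nonzero:
  assumes "a + b > -2"
  shows "coeff (jacobi_poly a b n) n \<noteq> 0"
proof -
  have "pochhammer (real n + a + b + 1) n > 0"
    using assms by (cases n) (auto intro!: pochhammer_pos)
  then show ?thesis
    by (simp add: coeff_jacobi_poly_top gbinomial_pochhammer' algebra_simps)
qed

lemma in_span_of_triangular_basis:
  fixes q :: "nat \<Rightarrow> 'a::field poly"
  assumes deg: "\<And>k. degree (q k) \<le> k" and top: "\<And>k. coeff (q k) k \<noteq> 0"
  shows "degree p \<le> n \<Longrightarrow> \<exists>c. p = (\<Sum>k\<le>n. smult (c k) (q k))"
proof (induction n arbitrary: p)
  case 0
  then show ?case
    using deg[of 0] top[of 0]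
    by (intro exI[of _ "\<lambda>_. coeff p 0 / coeff (q 0) 0"]) (auto elim!: degree_eq_zeroE)
next
  case (Suc n)
  define d where "d = coeff p (Suc n) / coeff (q (Suc n)) (Suc n)"
  define r where "r = p - smult d (q (Suc n))"
  have r_top: "coeff r (Suc n) = 0"
    using top[of "Suc n"] by (simp add: r_def d_def)
  have r_le: "degree r \<le> Suc n"
    using Suc.prems deg[of "Suc n"] unfolding r_def by (intro degree_diff_le) auto
  have "degree r \<le> n"
  proof (rule ccontr)
    assume "\<not> degree r \<le> n"
    with r_le have "degree r = Suc n"
      by simp
    with r_top show False
      by (metis leading_coeff_0_iff nat.distinct(1) degree_0)
  qed
  then obtain c where "r = (\<Sum>k\<le>n. smult (c k) (q k))"
    using Suc.IH by blast
  then show ?case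
    by (intro exI[of _ "c(Suc n := d)"]) (simp add: r_def algebra_simps)
qed

lemma polynomial_function_real_poly:
  fixes p :: "real \<Rightarrow> real"
  assumes "polynomial_function p"
  obtains q where "p = poly q"
proof -
  obtain A n where "p = (\<lambda>x. \<Sum>i\<le>n. A i * x ^ i)"
    using assms unfolding real_polynomial_function_eq[symmetric] real_polynomial_function_iff_sum
    by blast
  then have "p = poly (\<Sum>i\<le>n. monom (A i) i)"
    by (simp add: fun_eq_iff poly_sum poly_monom)
  then show thesis
    by (rule that)
qed

lemma polynomial_function_jacobiP: "polynomial_function (jacobiP a b n)"
  unfolding jacobiP_def real_polynomial_function_eq[symmetric]
  by (intro real_polynomial_function_sum real_polynomial_function.intros real_polynomial_function_power
      real_polynomial_function_divide real_polynomial_function_diff) auto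

lemma polynomial_function_in_span_jacobiP:
  assumes "a + b > -2" and "polynomial_function p"
  obtains N c where "\<And>t. p t = (\<Sum>k<N. c k * jacobiP a b k t)"
proof -
  obtain q where q: "p = poly q"
    using assms(2) by (rule polynomial_function_real_poly)
  obtain c where c: "q = (\<Sum>k\<le>degree q. smult (c k) (jacobi_poly a b k))"
    using in_span_of_triangular_basis[of "jacobi_poly a b" q "degree q"]
      degree_jacobi_poly_le coeff_jacobi_poly_top_nonzero[OF assms(1)] by blast
  have "p t = (\<Sum>k<Suc (degree q). c k * jacobiP a b k t)" for t
    unfolding q lessThan_Suc_atMost by (subst (1) c) (simp add: poly_sum poly_jacobi_poly)
  then show thesis
    by (rule that)
qed

section \<open>Continuous functions are dense in \<open>L\<^sup>2\<close> of a finite Borel measure\<close>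

lemma nn_integral_square_add_le:
  fixes u v :: "'a \<Rightarrow> real"
  assumes [measurable]: "u \<in> borel_measurable M" "v \<in> borel_measurable M"
  shows "(\<integral>\<^sup>+x. ennreal ((u x + v x)\<^sup>2) \<partial>M)
           \<le> 2 * (\<integral>\<^sup>+x. ennreal ((u x)\<^sup>2) \<partial>M) + 2 * (\<integral>\<^sup>+x. ennreal ((v x)\<^sup>2) \<partial>M)"
proof -
  have "ennreal ((u x + v x)\<^sup>2) \<le> 2 * ennreal ((u x)\<^sup>2) + 2 * ennreal ((v x)\<^sup>2)" for x
  proof -
    have "(u x + v x)\<^sup>2 \<le> 2 * (u x)\<^sup>2 + 2 * (v x)\<^sup>2"
      using zero_le_power2[of "u x - v x"] by (simp add: power2_eq_square algebra_simps)
    then have "ennreal ((u x + v x)\<^sup>2) \<le> ennreal (2 * (u x)\<^sup>2 + 2 * (v x)\<^sup>2)"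
      by (rule ennreal_leI)
    also have "\<dots> = 2 * ennreal ((u x)\<^sup>2) + 2 * ennreal ((v x)\<^sup>2)"
      by (simp add: ennreal_plus ennreal_mult)
    finally show ?thesis .
  qed
  then have "(\<integral>\<^sup>+x. ennreal ((u x + v x)\<^sup>2) \<partial>M)
      \<le> (\<integral>\<^sup>+x. 2 * ennreal ((u x)\<^sup>2) + 2 * ennreal ((v x)\<^sup>2) \<partial>M)"
    by (intro nn_integral_mono)
  also have "\<dots> = 2 * (\<integral>\<^sup>+x. ennreal ((u x)\<^sup>2) \<partial>M) + 2 * (\<integral>\<^sup>+x. ennreal ((v x)\<^sup>2) \<partial>M)"
    by (simp add: nn_integral_add nn_integral_cmult)
  finally show ?thesis .
qed

lemma nn_integral_square_le_uniform:
  assumes "AE x in M. \<bar>a x\<bar> \<le> d"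
  shows "(\<integral>\<^sup>+x. ennreal ((a x)\<^sup>2) \<partial>M) \<le> ennreal (d\<^sup>2) * emeasure M (space M)"
proof -
  have "AE x in M. ennreal ((a x)\<^sup>2) \<le> ennreal (d\<^sup>2)"
    using assms
  proof eventually_elim
    case (elim x)
    then have "\<bar>a x\<bar> \<le> \<bar>d\<bar>"
      by simp
    then show ?case
      by (simp add: abs_le_square_iff ennreal_leI)
  qed
  then have "(\<integral>\<^sup>+x. ennreal ((a x)\<^sup>2) \<partial>M) \<le> (\<integral>\<^sup>+x. ennreal (d\<^sup>2) \<partial>M)"
    by (rule nn_integral_mono_AE)
  then show ?thesis
    by simp
qed

lemma (in finite_measure) small_uniform_imp_small_nn_integral_square:
  fixes e :: real
  assumes "e > 0"
  obtains d where "d > 0"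
    and "\<And>a. AE x in M. \<bar>a x\<bar> \<le> d \<Longrightarrow> (\<integral>\<^sup>+x. ennreal ((a x)\<^sup>2) \<partial>M) < ennreal e"
proof
  define m where "m = measure M (space M)"
  have "m \<ge> 0"
    by (simp add: m_def)
  then show "sqrt (e / (m + 1)) > 0"
    using assms by simp
  fix a assume "AE x in M. \<bar>a x\<bar> \<le> sqrt (e / (m + 1))"
  then have "(\<integral>\<^sup>+x. ennreal ((a x)\<^sup>2) \<partial>M) \<le> ennreal (e / (m + 1)) * ennreal m"
    using nn_integral_square_le_uniform assms by (fastforce simp: emeasure_eq_measure m_def)
  also have "\<dots> = ennreal (e * (m / (m + 1)))"
    using assms \<open>m \<ge> 0\<close> by (simp add: ennreal_mult[symmetric])
  also have "\<dots> < ennreal e"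
    using assms \<open>m \<ge> 0\<close> by (intro ennreal_lessI) (auto simp: field_simps)
  finally show "(\<integral>\<^sup>+x. ennreal ((a x)\<^sup>2) \<partial>M) < ennreal e" .
qed

lemma abs_diff_floor_divide_le:
  fixes N y :: real
  assumes "N > 0"
  shows "\<bar>y - \<lfloor>N * y\<rfloor> / N\<bar> \<le> 1 / N"
proof -
  have frac: "0 \<le> N * y - \<lfloor>N * y\<rfloor>" "N * y - \<lfloor>N * y\<rfloor> \<le> 1"
    by linarith+
  have "y - \<lfloor>N * y\<rfloor> / N = (N * y - \<lfloor>N * y\<rfloor>) / N"
    using assms by (simp add: field_simps)
  then show ?thesis
    using frac assms by (simp add: divide_right_mono)
qed

lemma ennreal_two_mult_add_less:
  assumes "x < ennreal (e / 4)" and "y < ennreal (e / 4)"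
  shows "2 * x + 2 * y < ennreal e"
proof -
  have "0 < ennreal (e / 4)"
    using assms(1) by (rule le_less_trans[OF zero_le])
  then have "e > 0"
    by simp
  have half: "2 * ennreal (e / 4) = ennreal (e / 2)"
    using ennreal_mult[of 2 "e / 4"] \<open>e > 0\<close> by simp
  have "2 * x < ennreal (e / 2)" and "2 * y < ennreal (e / 2)"
    unfolding half[symmetric] using assms by (auto intro: ennreal_mult_strict_left_mono)
  then have "2 * x + 2 * y < ennreal (e / 2 + e / 2)"
    by (rule add_mono_ennreal)
  also have "\<dots> = ennreal e"
    by simp
  finally show ?thesis .
qed

lemma uniform_approx_by_polynomial_comp:
  fixes g h :: "'a::topological_space \<Rightarrow> real"
  assumes S: "compact S" and g: "continuous_on S g" "inj_on g S"
    and h: "continuous_on S h" and "e > 0"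
  obtains p where "polynomial_function p" and "\<And>x. x \<in> S \<Longrightarrow> \<bar>h x - p (g x)\<bar> < e"
proof -
  have "continuous_on (g ` S) (h \<circ> the_inv_into S g)"
    using h continuous_on_inv_into[OF g(1) S g(2)]
    by (intro continuous_on_compose) (simp_all add: the_inv_into_onto[OF g(2)])
  then obtain p where p: "real_polynomial_function p"
    and close: "\<And>y. y \<in> g ` S \<Longrightarrow> \<bar>(h \<circ> the_inv_into S g) y - p y\<bar> < e"
    using Stone_Weierstrass_real_polynomial_function[OF compact_continuous_image[OF g(1) S]] \<open>e > 0\<close>
    by blast
  show thesis
  proof (rule that)
    show "polynomial_function p"
      using p by (simp add: real_polynomial_function_eq)
    show "\<bar>h x - p (g x)\<bar> < e" if "x \<in> S" for x
      using close[of "g x"] that by (simp add: the_inv_into_f_f[OF g(2)])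
  qed
qed

definition L2_limit_of_continuous :: "'a::topological_space measure \<Rightarrow> ('a \<Rightarrow> real) \<Rightarrow> bool" where
  "L2_limit_of_continuous M f \<longleftrightarrow>
     (\<forall>e>0. \<exists>h. continuous_on UNIV h \<and> (\<integral>\<^sup>+x. ennreal ((f x - h x)\<^sup>2) \<partial>M) < ennreal e)"

locale finite_borel_measure = finite_measure M for M :: "'a::euclidean_space measure" +
  assumes sets_eq_borel: "sets M = sets borel"
begin

declare sets_eq_borel [measurable_cong]

lemma continuous_imp_measurable:
  "continuous_on UNIV h \<Longrightarrow> h \<in> borel_measurable M"
  by (simp add: measurable_cong_sets[OF sets_eq_borel refl] borel_measurable_continuous_onI)

lemma L2_limit_of_continuous_continuous:
  assumes "continuous_on UNIV f"
  shows "L2_limit_of_continuous M f"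
  unfolding L2_limit_of_continuous_def using assms by (intro allI impI exI[of _ f]) simp

lemma L2_limit_of_continuous_add:
  assumes [measurable]: "f \<in> borel_measurable M" "g \<in> borel_measurable M"
    and "L2_limit_of_continuous M f" "L2_limit_of_continuous M g"
  shows "L2_limit_of_continuous M (\<lambda>x. f x + g x)"
  unfolding L2_limit_of_continuous_def
proof (intro allI impI)
  fix e :: real assume "e > 0"
  then obtain h k where h: "continuous_on UNIV h"
      "(\<integral>\<^sup>+x. ennreal ((f x - h x)\<^sup>2) \<partial>M) < ennreal (e / 4)"
    and k: "continuous_on UNIV k" "(\<integral>\<^sup>+x. ennreal ((g x - k x)\<^sup>2) \<partial>M) < ennreal (e / 4)"
    using assms(3,4) unfolding L2_limit_of_continuous_def by (meson divide_pos_pos zero_less_numeral)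
  note [measurable] = continuous_imp_measurable[OF h(1)] continuous_imp_measurable[OF k(1)]
  have "(f x + g x) - (h x + k x) = (f x - h x) + (g x - k x)" for x
    by simp
  then have "(\<integral>\<^sup>+x. ennreal (((f x + g x) - (h x + k x))\<^sup>2) \<partial>M)
      \<le> 2 * (\<integral>\<^sup>+x. ennreal ((f x - h x)\<^sup>2) \<partial>M) + 2 * (\<integral>\<^sup>+x. ennreal ((g x - k x)\<^sup>2) \<partial>M)"
    by (simp only:) (rule nn_integral_square_add_le; measurable)
  also have "\<dots> < ennreal e"
    using h k by (intro ennreal_two_mult_add_less)
  finally have "(\<integral>\<^sup>+x. ennreal ((f x + g x - (h x + k x))\<^sup>2) \<partial>M) < ennreal e" .
  moreover have "continuous_on UNIV (\<lambda>x. h x + k x)"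
    using h k by (intro continuous_intros)
  ultimately show "\<exists>h. continuous_on UNIV h \<and> (\<integral>\<^sup>+x. ennreal ((f x + g x - h x)\<^sup>2) \<partial>M) < ennreal e"
    by (intro exI[of _ "\<lambda>x. h x + k x"] conjI)
qed

lemma L2_limit_of_continuous_closed:
  assumes [measurable]: "f \<in> borel_measurable M"
    and approx: "\<And>e. e > 0 \<Longrightarrow> \<exists>g \<in> borel_measurable M. L2_limit_of_continuous M g
                                \<and> (\<integral>\<^sup>+x. ennreal ((f x - g x)\<^sup>2) \<partial>M) < ennreal e"
  shows "L2_limit_of_continuous M f"
  unfolding L2_limit_of_continuous_def
proof (intro allI impI)
  fix e :: real assume "e > 0"
  then obtain g where [measurable]: "g \<in> borel_measurable M" and "L2_limit_of_continuous M g"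
    and fg: "(\<integral>\<^sup>+x. ennreal ((f x - g x)\<^sup>2) \<partial>M) < ennreal (e / 4)"
    using approx[of "e / 4"] by auto
  then obtain h where h: "continuous_on UNIV h"
    and gh: "(\<integral>\<^sup>+x. ennreal ((g x - h x)\<^sup>2) \<partial>M) < ennreal (e / 4)"
    using \<open>e > 0\<close> unfolding L2_limit_of_continuous_def by (meson divide_pos_pos zero_less_numeral)
  note [measurable] = continuous_imp_measurable[OF h]
  have "f x - h x = (f x - g x) + (g x - h x)" for x
    by simp
  then have "(\<integral>\<^sup>+x. ennreal ((f x - h x)\<^sup>2) \<partial>M)
      \<le> 2 * (\<integral>\<^sup>+x. ennreal ((f x - g x)\<^sup>2) \<partial>M) + 2 * (\<integral>\<^sup>+x. ennreal ((g x - h x)\<^sup>2) \<partial>M)"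
    by (simp only:) (rule nn_integral_square_add_le; measurable)
  also have "\<dots> < ennreal e"
    using fg gh by (rule ennreal_two_mult_add_less)
  finally show "\<exists>h. continuous_on UNIV h \<and> (\<integral>\<^sup>+x. ennreal ((f x - h x)\<^sup>2) \<partial>M) < ennreal e"
    using h by blast
qed

lemma compact_open_approx:
  assumes A: "A \<in> sets borel" and "e > 0"
  obtains K U where "compact K" "K \<subseteq> A" "A \<subseteq> U" "open U" "measure M (U - K) < e"
proof -
  have fin: "emeasure M (space M) \<noteq> \<infinity>"
    by (simp add: emeasure_eq_measure)
  have "\<exists>K. K \<subseteq> A \<and> compact K \<and> measure M A < measure M K + e / 2"
  proof (cases "measure M A < e / 2")
    case False
    then have "ennreal (measure M A - e / 2) < ennreal (measure M A)"
      using \<open>e > 0\<close> by (intro ennreal_lessI) auto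
    also have "\<dots> = (SUP K \<in> {K. K \<subseteq> A \<and> compact K}. emeasure M K)"
      using inner_regular[OF sets_eq_borel fin A] by (simp add: emeasure_eq_measure)
    finally obtain K where "K \<subseteq> A" "compact K" "ennreal (measure M A - e / 2) < ennreal (measure M K)"
      by (auto simp: less_SUP_iff emeasure_eq_measure)
    then show ?thesis
      using False by (auto simp: ennreal_less_iff)
  qed (intro exI[of _ "{}"], simp)
  then obtain K where K: "K \<subseteq> A" "compact K" "measure M A < measure M K + e / 2"
    by blast
  have "(INF U \<in> {U. A \<subseteq> U \<and> open U}. emeasure M U) = ennreal (measure M A)"
    using outer_regular[OF sets_eq_borel fin A] by (simp add: emeasure_eq_measure)
  also have "\<dots> < ennreal (measure M A + e / 2)"
    using \<open>e > 0\<close> by (intro ennreal_lessI) (auto intro: add_nonneg_pos)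
  finally obtain U where U: "A \<subseteq> U" "open U" "measure M U < measure M A + e / 2"
    by (auto simp: INF_less_iff emeasure_eq_measure ennreal_less_iff)
  have "measure M (U - K) = measure M U - measure M K"
    using K U by (intro finite_measure_Diff) (auto simp: sets_eq_borel borel_compact)
  then show thesis
    using that K U by simp
qed

(* Regularity gives compact K and open U with K \<subseteq> A \<subseteq> U and U - K small; a continuous
   Urysohn function that is c on K and 0 off U is then L^2-close to c times the indicator of A. *)
lemma L2_limit_of_continuous_scaled_indicator:
  assumes "A \<in> sets borel"
  shows "L2_limit_of_continuous M (\<lambda>x. c * indicator A x)"
  unfolding L2_limit_of_continuous_def
proof (intro allI impI)
  fix e :: real assume "e > 0"
  have "c\<^sup>2 + 1 > 0"
    by (intro add_nonneg_pos) auto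
  then obtain K U where KU: "compact K" "K \<subseteq> A" "A \<subseteq> U" "open U"
    and small: "measure M (U - K) < e / (c\<^sup>2 + 1)"
    using compact_open_approx[OF assms, of "e / (c\<^sup>2 + 1)"] \<open>e > 0\<close> by auto
  obtain f :: "'a \<Rightarrow> real" where f: "continuous_on UNIV f" "\<And>x. f x \<in> closed_segment c 0"
    "\<And>x. x \<in> K \<Longrightarrow> f x = c" "\<And>x. x \<in> - U \<Longrightarrow> f x = 0"
    using Urysohn[of K "- U" c 0] KU by (auto simp: compact_imp_closed)
  have "ennreal ((c * indicator A x - f x)\<^sup>2) \<le> ennreal (c\<^sup>2) * indicator (U - K) x" for x
  proof -
    have "\<bar>c * indicator A x - f x\<bar> \<le> \<bar>c\<bar>"
      using f(2)[of x] by (auto simp: closed_segment_eq_real_ivl indicator_def split: if_splits)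
    then show ?thesis
      using f(3,4)[of x] KU by (auto simp: indicator_def abs_le_square_iff ennreal_leI)
  qed
  then have "(\<integral>\<^sup>+x. ennreal ((c * indicator A x - f x)\<^sup>2) \<partial>M)
      \<le> (\<integral>\<^sup>+x. ennreal (c\<^sup>2) * indicator (U - K) x \<partial>M)"
    by (intro nn_integral_mono)
  also have "\<dots> = ennreal (c\<^sup>2) * emeasure M (U - K)"
  proof (rule nn_integral_cmult_indicator)
    show "U - K \<in> sets M"
      using KU unfolding sets_eq_borel by (intro sets.Diff borel_open borel_compact)
  qed
  also have "\<dots> = ennreal (c\<^sup>2 * measure M (U - K))"
    by (simp add: emeasure_eq_measure ennreal_mult)
  also have "\<dots> < ennreal e"
  proof (rule ennreal_lessI[OF \<open>e > 0\<close>])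
    have "c\<^sup>2 * measure M (U - K) \<le> c\<^sup>2 * (e / (c\<^sup>2 + 1))"
      using small by (intro mult_left_mono) auto
    also have "\<dots> < e"
      using \<open>e > 0\<close> \<open>c\<^sup>2 + 1 > 0\<close> by (simp add: field_simps)
    finally show "c\<^sup>2 * measure M (U - K) < e" .
  qed
  finally show "\<exists>h. continuous_on UNIV h \<and> (\<integral>\<^sup>+x. ennreal ((c * indicator A x - h x)\<^sup>2) \<partial>M) < ennreal e"
    using f(1) by blast
qed

lemma L2_limit_of_continuous_simple:
  assumes "finite J" and "\<And>j. j \<in> J \<Longrightarrow> A j \<in> sets borel"
  shows "L2_limit_of_continuous M (\<lambda>x. \<Sum>j\<in>J. c j * indicator (A j) x)"
  using assms
proof (induction J rule: finite_induct)
  case empty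
  then show ?case
    by (simp add: L2_limit_of_continuous_continuous)
next
  case (insert j J)
  have "(\<lambda>x. \<Sum>i\<in>J. c i * indicator (A i) x) \<in> borel_measurable M"
    using insert.prems by (intro borel_measurable_sum borel_measurable_times borel_measurable_const
        borel_measurable_indicator) (auto simp: sets_eq_borel)
  moreover have "(\<lambda>x. c j * indicator (A j) x) \<in> borel_measurable M"
    using insert.prems by (simp add: sets_eq_borel)
  ultimately have "L2_limit_of_continuous M (\<lambda>x. c j * indicator (A j) x + (\<Sum>i\<in>J. c i * indicator (A i) x))"
    using insert by (intro L2_limit_of_continuous_add L2_limit_of_continuous_scaled_indicator) simp_all
  then show ?case
    by (simp only: sum.insert[OF insert.hyps])
qed

(* Rounding f down to the grid (1/N)\<int> gives a simple function uniformly within 1/N of f. *)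
lemma L2_limit_of_continuous_bounded:
  assumes [measurable]: "f \<in> borel_measurable M" and bounded: "\<And>x. \<bar>f x\<bar> \<le> B"
  shows "L2_limit_of_continuous M f"
proof (rule L2_limit_of_continuous_closed[OF assms(1)])
  fix e :: real assume "e > 0"
  then obtain d where "d > 0"
    and d: "\<And>a. AE x in M. \<bar>a x\<bar> \<le> d \<Longrightarrow> (\<integral>\<^sup>+x. ennreal ((a x)\<^sup>2) \<partial>M) < ennreal e"
    using small_uniform_imp_small_nn_integral_square by blast
  then obtain n :: nat where n: "inverse (real (Suc n)) < d"
    using reals_Archimedean by blast
  define N where "N = real (Suc n)"
  define K where "K = \<lceil>B * N\<rceil>"
  define g where "g x = (\<Sum>j\<in>{-K..K}. (real_of_int j / N) * indicator {x. \<lfloor>N * f x\<rfloor> = j} x)" for x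
  have g_eq: "g x = real_of_int \<lfloor>N * f x\<rfloor> / N" for x
  proof -
    have "\<bar>N * f x\<bar> \<le> B * N"
      using bounded[of x] by (simp add: N_def abs_mult mult.commute)
    then have "\<lfloor>N * f x\<rfloor> \<in> {-K..K}"
      unfolding K_def by (auto simp: abs_le_iff) linarith+
    moreover have "g x = (\<Sum>j\<in>{-K..K}. if j = \<lfloor>N * f x\<rfloor> then real_of_int j / N else 0)"
      unfolding g_def by (intro sum.cong) (auto simp: indicator_def)
    ultimately show ?thesis
      by simp
  qed
  show "\<exists>g \<in> borel_measurable M. L2_limit_of_continuous M g \<and> (\<integral>\<^sup>+x. ennreal ((f x - g x)\<^sup>2) \<partial>M) < ennreal e"
  proof (intro bexI conjI)
    show "g \<in> borel_measurable M"
      unfolding g_def by measurable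
    show "L2_limit_of_continuous M g"
      unfolding g_def by (intro L2_limit_of_continuous_simple) auto
    have "\<bar>f x - g x\<bar> \<le> d" for x
      using abs_diff_floor_divide_le[of N "f x"] n by (simp add: g_eq N_def divide_inverse)
    then show "(\<integral>\<^sup>+x. ennreal ((f x - g x)\<^sup>2) \<partial>M) < ennreal e"
      by (intro d AE_I2)
  qed
qed

lemma L2_limit_of_continuous_square_integrable:
  assumes [measurable]: "f \<in> borel_measurable M" and finite: "(\<integral>\<^sup>+x. ennreal ((f x)\<^sup>2) \<partial>M) < \<infinity>"
  shows "L2_limit_of_continuous M f"
proof (rule L2_limit_of_continuous_closed[OF assms(1)])
  fix e :: real assume "e > 0"
  define g where "g n x = max (- real n) (min (real n) (f x))" for n :: nat and x
  have [measurable]: "g n \<in> borel_measurable M" for n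
    unfolding g_def by measurable
  have "(\<lambda>n. \<integral>\<^sup>+x. norm (0 - (f x - g n x)\<^sup>2) \<partial>M) \<longlonglongrightarrow> 0"
  proof (rule nn_integral_dominated_convergence_norm)
    show "AE x in M. norm ((f x - g n x)\<^sup>2) \<le> (f x)\<^sup>2" for n
      by (intro AE_I2) (auto simp: g_def abs_le_square_iff[symmetric])
    show "(\<integral>\<^sup>+x. ennreal ((f x)\<^sup>2) \<partial>M) < \<infinity>"
      by (fact finite)
    show "AE x in M. (\<lambda>n. (f x - g n x)\<^sup>2) \<longlonglongrightarrow> 0" for n
    proof (intro AE_I2 tendsto_eventually eventually_sequentiallyI)
      fix x and n :: nat
      assume "nat \<lceil>\<bar>f x\<bar>\<rceil> \<le> n"
      then have "\<bar>f x\<bar> \<le> real n"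
        by (meson of_nat_le_iff order_trans real_nat_ceiling_ge)
      then show "(f x - g n x)\<^sup>2 = 0"
        by (auto simp: g_def max_def min_def)
    qed
  qed measurable
  then have "\<forall>\<^sub>F n in sequentially. (\<integral>\<^sup>+x. ennreal ((f x - g n x)\<^sup>2) \<partial>M) < ennreal e"
    using \<open>e > 0\<close> by (auto dest!: order_tendstoD(2)[where a="ennreal e"])
  then obtain n where "(\<integral>\<^sup>+x. ennreal ((f x - g n x)\<^sup>2) \<partial>M) < ennreal e"
    by (auto simp: eventually_sequentially)
  moreover have "L2_limit_of_continuous M (g n)"
    by (rule L2_limit_of_continuous_bounded[where B = "real n"]) (auto simp: g_def)
  ultimately show "\<exists>g \<in> borel_measurable M. L2_limit_of_continuous M g
      \<and> (\<integral>\<^sup>+x. ennreal ((f x - g x)\<^sup>2) \<partial>M) < ennreal e"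
    by (intro bexI[of _ "g n"]) auto
qed

lemma nn_integral_square_finite_if_continuous_on:
  fixes f :: "'a \<Rightarrow> real"
  assumes "compact S" and "continuous_on S f" and "AE x in M. x \<in> S"
  shows "(\<integral>\<^sup>+x. ennreal ((f x)\<^sup>2) \<partial>M) < \<infinity>"
proof -
  obtain B where "\<forall>y \<in> f ` S. \<bar>y\<bar> \<le> B"
    using compact_continuous_image[OF assms(2,1)] compact_imp_bounded bounded_real by blast
  then have B: "\<And>x. x \<in> S \<Longrightarrow> \<bar>f x\<bar> \<le> B"
    by blast
  have "AE x in M. \<bar>f x\<bar> \<le> B"
    using assms(3) by eventually_elim (rule B)
  then have "(\<integral>\<^sup>+x. ennreal ((f x)\<^sup>2) \<partial>M) \<le> ennreal (B\<^sup>2) * emeasure M (space M)"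
    by (rule nn_integral_square_le_uniform)
  also have "\<dots> < \<infinity>"
    by (simp add: emeasure_eq_measure ennreal_mult_less_top)
  finally show ?thesis .
qed

lemma L2_approx_by_polynomial_comp:
  fixes f g :: "'a \<Rightarrow> real"
  assumes [measurable]: "f \<in> borel_measurable M" "g \<in> borel_measurable M"
    and finite: "(\<integral>\<^sup>+x. ennreal ((f x)\<^sup>2) \<partial>M) < \<infinity>"
    and S: "compact S" "AE x in M. x \<in> S" and g: "continuous_on S g" "inj_on g S"
    and "e > 0"
  obtains p where "polynomial_function p" and "(\<integral>\<^sup>+x. ennreal ((f x - p (g x))\<^sup>2) \<partial>M) < ennreal e"
proof -
  obtain h where h: "continuous_on UNIV h" and fh: "(\<integral>\<^sup>+x. ennreal ((f x - h x)\<^sup>2) \<partial>M) < ennreal (e / 4)"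
    using L2_limit_of_continuous_square_integrable[OF assms(1) finite] \<open>e > 0\<close>
    unfolding L2_limit_of_continuous_def by (meson divide_pos_pos zero_less_numeral)
  note [measurable] = continuous_imp_measurable[OF h]
  obtain d where "d > 0"
    and d: "\<And>a. AE x in M. \<bar>a x\<bar> \<le> d \<Longrightarrow> (\<integral>\<^sup>+x. ennreal ((a x)\<^sup>2) \<partial>M) < ennreal (e / 4)"
    using small_uniform_imp_small_nn_integral_square[of "e / 4"] \<open>e > 0\<close> by auto
  obtain p where p: "polynomial_function p" and hp: "\<And>x. x \<in> S \<Longrightarrow> \<bar>h x - p (g x)\<bar> < d"
    using uniform_approx_by_polynomial_comp[OF S(1) g continuous_on_subset[OF h] \<open>d > 0\<close>] by blast
  have [measurable]: "p \<in> borel_measurable borel"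
    using p by (intro borel_measurable_continuous_onI continuous_on_polymonial_function)
  have "AE x in M. \<bar>h x - p (g x)\<bar> \<le> d"
    using S(2) by eventually_elim (simp add: hp less_imp_le)
  then have "(\<integral>\<^sup>+x. ennreal ((h x - p (g x))\<^sup>2) \<partial>M) < ennreal (e / 4)"
    by (rule d)
  moreover have "f x - p (g x) = (f x - h x) + (h x - p (g x))" for x
    by simp
  then have "(\<integral>\<^sup>+x. ennreal ((f x - p (g x))\<^sup>2) \<partial>M)
      \<le> 2 * (\<integral>\<^sup>+x. ennreal ((f x - h x)\<^sup>2) \<partial>M) + 2 * (\<integral>\<^sup>+x. ennreal ((h x - p (g x))\<^sup>2) \<partial>M)"
    by (simp only:) (rule nn_integral_square_add_le; measurable)
  ultimately have "(\<integral>\<^sup>+x. ennreal ((f x - p (g x))\<^sup>2) \<partial>M) < ennreal e"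
    using fh by (meson ennreal_two_mult_add_less order_le_less_trans)
  with p show thesis
    by (rule that)
qed

end

section \<open>Weighted \<open>L\<^sup>2\<close> spaces on \<open>[0, b]\<close> with a multiplier\<close>

lemma nn_integral_square_density:
  fixes a W :: "'a::euclidean_space \<Rightarrow> real"
  assumes [measurable]: "a \<in> borel_measurable borel" "W \<in> borel_measurable borel" "S \<in> sets borel"
  shows "(\<integral>\<^sup>+x. ennreal ((a x)\<^sup>2) \<partial>density lborel (\<lambda>x. ennreal (W x) * indicator S x))
       = (\<integral>\<^sup>+x. ennreal ((a x)\<^sup>2 * W x) * indicator S x \<partial>lborel)"
  by (subst nn_integral_density) (auto intro!: nn_integral_cong simp: ennreal_mult' ennreal_mult'' mult_ac)

lemma AE_lborel_interior_Icc: "AE x in lborel. x \<in> {a..b} \<longrightarrow> a < x \<and> x < (b::real)"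
  using AE_lborel_singleton[of a] AE_lborel_singleton[of b] by eventually_elim auto

(* W_measure is W dx on [0, b] with W = m^2 \<omega>; dividing by m maps L2w b \<omega> isometrically
   into L^2(W_measure). *)
locale Icc_multiplier =
  fixes b :: real and m \<omega> :: "real \<Rightarrow> real"
  assumes m_measurable [measurable]: "m \<in> borel_measurable borel"
    and \<omega>_measurable [measurable]: "\<omega> \<in> borel_measurable borel"
    and m_nonzero: "\<And>x. 0 < x \<Longrightarrow> x < b \<Longrightarrow> m x \<noteq> 0"
    and finite_weight: "(\<integral>\<^sup>+x. ennreal ((m x)\<^sup>2 * \<omega> x) * indicator {0..b} x \<partial>lborel) < \<infinity>"
begin

definition W_measure :: "real measure" where
  "W_measure = density lborel (\<lambda>x. ennreal ((m x)\<^sup>2 * \<omega> x) * indicator {0..b} x)"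

sublocale W: finite_borel_measure W_measure
  unfolding finite_borel_measure_def finite_borel_measure_axioms_def
  using finite_weight by (auto intro!: finite_measureI simp: W_measure_def emeasure_density)

lemma nn_integral_W_measure:
  assumes [measurable]: "a \<in> borel_measurable borel"
  shows "(\<integral>\<^sup>+x. ennreal ((a x)\<^sup>2) \<partial>W_measure)
           = (\<integral>\<^sup>+x. ennreal ((m x * a x)\<^sup>2 * \<omega> x) * indicator {0..b} x \<partial>lborel)"
  unfolding W_measure_def by (subst nn_integral_square_density) (simp_all add: power_mult_distrib mult_ac)

lemma AE_W_measure_Icc: "AE x in W_measure. x \<in> {0..b}"
  unfolding W_measure_def by (subst AE_density) (auto simp: indicator_def)

lemma multiplier_in_L2w:
  assumes [measurable]: "f \<in> borel_measurable borel" and "continuous_on {0..b} f"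
  shows "(\<lambda>x. m x * f x) \<in> L2w b \<omega>"
proof -
  have "(\<integral>\<^sup>+x. ennreal ((f x)\<^sup>2) \<partial>W_measure) < \<infinity>"
    using assms(2) AE_W_measure_Icc by (intro W.nn_integral_square_finite_if_continuous_on) auto
  then show ?thesis
    by (simp add: L2w_def set_borel_measurable_def nn_integral_W_measure)
qed

lemma L2w_approx_by_multiplier_polynomial_comp:
  fixes u g :: "real \<Rightarrow> real"
  assumes u: "u \<in> L2w b \<omega>" and [measurable]: "g \<in> borel_measurable borel"
    and g: "continuous_on {0..b} g" "inj_on g {0..b}" and "e > 0"
  obtains p where "polynomial_function p"
    and "(\<integral>\<^sup>+x. ennreal ((u x - m x * p (g x))\<^sup>2 * \<omega> x) * indicator {0..b} x \<partial>lborel) < ennreal e"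
proof -
  define v where "v x = indicator {0..b} x * u x / m x" for x
  have "(\<lambda>x. indicator {0..b} x * u x) \<in> borel_measurable borel"
    using u by (simp add: L2w_def set_borel_measurable_def)
  then have [measurable]: "v \<in> borel_measurable borel"
    unfolding v_def by measurable
  have mv: "m x * v x = u x" if "x \<in> {0..b}" "0 < x" "x < b" for x
    using m_nonzero that by (simp add: v_def)
  have "(\<integral>\<^sup>+x. ennreal ((v x)\<^sup>2) \<partial>W_measure)
      = (\<integral>\<^sup>+x. ennreal ((u x)\<^sup>2 * \<omega> x) * indicator {0..b} x \<partial>lborel)"
    unfolding nn_integral_W_measure[OF \<open>v \<in> borel_measurable borel\<close>]
    using AE_lborel_interior_Icc[of 0 b] by (intro nn_integral_cong_AE) (auto simp: indicator_def mv)
  also have "\<dots> < \<infinity>"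
    using u by (simp add: L2w_def)
  finally obtain p where p: "polynomial_function p"
    and vp: "(\<integral>\<^sup>+x. ennreal ((v x - p (g x))\<^sup>2) \<partial>W_measure) < ennreal e"
    using W.L2_approx_by_polynomial_comp[of v g "{0..b}" e] AE_W_measure_Icc g \<open>e > 0\<close>
    by (auto simp: measurable_cong_sets[OF W.sets_eq_borel refl])
  have [measurable]: "p \<in> borel_measurable borel"
    using p by (intro borel_measurable_continuous_onI continuous_on_polymonial_function)
  have "u x - m x * p (g x) = m x * (v x - p (g x))" if "x \<in> {0..b}" "0 < x" "x < b" for x
    using mv[OF that] by (simp add: right_diff_distrib)
  then have "(\<integral>\<^sup>+x. ennreal ((u x - m x * p (g x))\<^sup>2 * \<omega> x) * indicator {0..b} x \<partial>lborel)
      = (\<integral>\<^sup>+x. ennreal ((m x * (v x - p (g x)))\<^sup>2 * \<omega> x) * indicator {0..b} x \<partial>lborel)"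
    using AE_lborel_interior_Icc[of 0 b] by (intro nn_integral_cong_AE) (auto simp: indicator_def)
  also have "\<dots> = (\<integral>\<^sup>+x. ennreal ((v x - p (g x))\<^sup>2) \<partial>W_measure)"
    by (intro nn_integral_W_measure[symmetric]) measurable
  finally have "(\<integral>\<^sup>+x. ennreal ((u x - m x * p (g x))\<^sup>2 * \<omega> x) * indicator {0..b} x \<partial>lborel)
      < ennreal e"
    using vp by simp
  with p show thesis
    by (rule that)
qed

lemma complete_in_multiplier_polynomial_comp:
  fixes g :: "real \<Rightarrow> real" and P :: "nat \<Rightarrow> real \<Rightarrow> real"
  assumes [measurable]: "g \<in> borel_measurable borel"
    and g: "continuous_on {0..b} g" "inj_on g {0..b}"
    and P: "\<And>n. polynomial_function (P n)"
    and span: "\<And>p. polynomial_function p \<Longrightarrow> \<exists>N c. \<forall>t. p t = (\<Sum>k<N. c k * P k t)"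
  shows "complete_in b \<omega> (\<lambda>n x. m x * P n (g x))"
  unfolding complete_in_def
proof (intro conjI allI ballI impI)
  fix n
  have [measurable]: "P n \<in> borel_measurable borel"
    using P by (intro borel_measurable_continuous_onI continuous_on_polymonial_function)
  have cont: "continuous_on {0..b} (\<lambda>x. P n (g x))"
    by (intro continuous_on_compose2[OF continuous_on_polymonial_function[OF P] g(1)]) auto
  show "(\<lambda>x. m x * P n (g x)) \<in> L2w b \<omega>"
    by (rule multiplier_in_L2w[OF _ cont]) measurable
next
  fix u and e :: real
  assume "u \<in> L2w b \<omega>" and "e > 0"
  then obtain p where p: "polynomial_function p"
    and close: "(\<integral>\<^sup>+x. ennreal ((u x - m x * p (g x))\<^sup>2 * \<omega> x) * indicator {0..b} x \<partial>lborel) < ennreal e"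
    by (rule L2w_approx_by_multiplier_polynomial_comp[OF _ assms(1) g])
  obtain N c where "\<And>t. p t = (\<Sum>k<N. c k * P k t)"
    using span[OF p] by blast
  then have sum_eq: "(\<Sum>k<N. c k * (m x * P k (g x))) = m x * p (g x)" for x
    by (simp add: sum_distrib_left mult.left_commute)
  show "\<exists>N c. (\<integral>\<^sup>+x. ennreal ((u x - (\<Sum>k<N. c k * (m x * P k (g x))))\<^sup>2 * \<omega> x)
      * indicator {0..b} x \<partial>lborel) < ennreal e"
    using close unfolding sum_eq[symmetric] by blast
qed

end

section \<open>The Jacobi weight\<close>

lemma has_integral_powr_mult_diff_powr:
  fixes b \<sigma> \<alpha> :: real
  assumes "0 \<le> b" and "\<sigma> > 0" and "\<alpha> > -1"
  shows "((\<lambda>x. x powr (\<sigma> - 1) * (b powr \<sigma> - x powr \<sigma>) powr \<alpha>) has_integral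
           (b powr \<sigma>) powr (\<alpha> + 1) / (\<sigma> * (\<alpha> + 1))) {0..b}"
proof -
  define F where "F x = - ((b powr \<sigma> - x powr \<sigma>) powr (\<alpha> + 1)) / (\<sigma> * (\<alpha> + 1))" for x
  have "((\<lambda>x. x powr (\<sigma> - 1) * (b powr \<sigma> - x powr \<sigma>) powr \<alpha>) has_integral (F b - F 0)) {0..b}"
  proof (rule fundamental_theorem_of_calculus_interior)
    have "b powr \<sigma> - x powr \<sigma> \<ge> 0" if "x \<in> {0..b}" for x
      using that assms by (auto intro!: powr_mono2)
    then show "continuous_on {0..b} F"
      unfolding F_def using assms
      by (intro continuous_intros continuous_on_powr') (auto intro!: continuous_intros)
  next
    fix x assume x: "x \<in> {0<..<b}"
    have "x powr \<sigma> < b powr \<sigma>"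
      using x assms by (auto intro!: powr_less_mono2)
    then have "(F has_real_derivative
        - ((\<alpha> + 1) * (b powr \<sigma> - x powr \<sigma>) powr \<alpha> * (- (\<sigma> * x powr (\<sigma> - 1)))) / (\<sigma> * (\<alpha> + 1))) (at x)"
      unfolding F_def using x assms
      by (auto intro!: derivative_eq_intros)
    moreover have "- ((\<alpha> + 1) * (b powr \<sigma> - x powr \<sigma>) powr \<alpha> * (- (\<sigma> * x powr (\<sigma> - 1))))
        / (\<sigma> * (\<alpha> + 1)) = x powr (\<sigma> - 1) * (b powr \<sigma> - x powr \<sigma>) powr \<alpha>"
    proof -
      have "\<sigma> * (\<alpha> + 1) > 0"
        using assms by simp
      then have "\<sigma> + \<alpha> * \<sigma> \<noteq> 0"
        by (simp add: algebra_simps)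
      then show ?thesis
        by (simp add: field_simps)
    qed
    ultimately show "(F has_vector_derivative x powr (\<sigma> - 1) * (b powr \<sigma> - x powr \<sigma>) powr \<alpha>) (at x)"
      by (simp add: has_real_derivative_iff_has_vector_derivative)
  qed (use assms in auto)
  moreover have "F b - F 0 = (b powr \<sigma>) powr (\<alpha> + 1) / (\<sigma> * (\<alpha> + 1))"
    using assms by (simp add: F_def)
  ultimately show ?thesis
    by simp
qed

lemma powr_le_max_endpoints:
  fixes l h y a :: real
  assumes "0 < l" and "l \<le> y" and "y \<le> h"
  shows "y powr a \<le> max (l powr a) (h powr a)"
proof (cases "a \<ge> 0")
  case True
  then have "y powr a \<le> h powr a"
    using assms by (intro powr_mono2) auto
  then show ?thesis
    by simp
next
  case False
  then have "y powr a \<le> l powr a"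
    using assms by (intro powr_mono2') auto
  then show ?thesis
    by simp
qed

(* Up to a constant factor, the Jacobi weight (1 - t)^\<alpha> (1 + t)^\<beta> dt pulled back along
   t = 2 (x/b)^\<sigma> - 1. *)
definition jacobi_weight :: "real \<Rightarrow> real \<Rightarrow> real \<Rightarrow> real \<Rightarrow> real \<Rightarrow> real" where
  "jacobi_weight b \<sigma> \<alpha> \<beta> x = x powr (\<sigma> * \<beta> + \<sigma> - 1) * (b powr \<sigma> - x powr \<sigma>) powr \<alpha>"

(* Split at the point x0 where x0^\<sigma> = b^\<sigma> / 2: below it the factor (b^\<sigma> - x^\<sigma>)^\<alpha>
   is bounded, above it the factor x^(\<sigma> \<beta>) is. *)
lemma jacobi_weight_le_sum:
  assumes "b > 0" and "\<sigma> > 0"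
  obtains C1 C2 where "C1 \<ge> 0" and "C2 \<ge> 0"
    and "\<And>x. x \<in> {0..b} \<Longrightarrow> jacobi_weight b \<sigma> \<alpha> \<beta> x
           \<le> C1 * x powr (\<sigma> * \<beta> + \<sigma> - 1) + C2 * (x powr (\<sigma> - 1) * (b powr \<sigma> - x powr \<sigma>) powr \<alpha>)"
proof
  define B where "B = b powr \<sigma>"
  define x0 where "x0 = (B / 2) powr (1 / \<sigma>)"
  define p where "p = \<sigma> * \<beta> + \<sigma> - 1"
  define k where "k x = x powr (\<sigma> - 1) * (B - x powr \<sigma>) powr \<alpha>" for x
  define C1 where "C1 = max ((B / 2) powr \<alpha>) (B powr \<alpha>)"
  define C2 where "C2 = max (x0 powr (\<sigma> * \<beta>)) (b powr (\<sigma> * \<beta>))"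
  have "B > 0" and "x0 > 0"
    using assms by (simp_all add: B_def x0_def)
  have x0_powr: "x0 powr \<sigma> = B / 2"
    using \<open>B > 0\<close> assms by (simp add: x0_def powr_powr)
  show nonneg: "C1 \<ge> 0" "C2 \<ge> 0"
    by (simp_all add: C1_def C2_def le_max_iff_disj)
  fix x assume x: "x \<in> {0..b}"
  have "jacobi_weight b \<sigma> \<alpha> \<beta> x \<le> C1 * x powr p + C2 * k x"
  proof (cases "x \<le> x0")
    case True
    then have "x powr \<sigma> \<le> B / 2"
      using x assms x0_powr by (metis atLeastAtMost_iff powr_mono2 less_imp_le)
    then have "(B - x powr \<sigma>) powr \<alpha> \<le> C1"
      unfolding C1_def using \<open>B > 0\<close> by (intro powr_le_max_endpoints) auto
    then have "x powr p * (B - x powr \<sigma>) powr \<alpha> \<le> x powr p * C1"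
      by (intro mult_left_mono) auto
    moreover have "C2 * k x \<ge> 0"
      using nonneg by (simp add: k_def)
    ultimately show ?thesis
      unfolding jacobi_weight_def B_def[symmetric] p_def[symmetric] by (simp add: mult.commute)
  next
    case False
    then have "x powr (\<sigma> * \<beta>) \<le> C2"
      unfolding C2_def using x \<open>x0 > 0\<close> by (intro powr_le_max_endpoints) auto
    then have "x powr (\<sigma> * \<beta>) * k x \<le> C2 * k x"
      by (simp add: k_def mult_right_mono)
    moreover have "jacobi_weight b \<sigma> \<alpha> \<beta> x = x powr (\<sigma> * \<beta>) * k x"
      by (simp add: jacobi_weight_def k_def B_def powr_add[symmetric] add_diff_eq)
    moreover have "C1 * x powr p \<ge> 0"
      using nonneg by simp
    ultimately show ?thesis
      by linarith
  qed
  then show "jacobi_weight b \<sigma> \<alpha> \<beta> x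
      \<le> C1 * x powr (\<sigma> * \<beta> + \<sigma> - 1) + C2 * (x powr (\<sigma> - 1) * (b powr \<sigma> - x powr \<sigma>) powr \<alpha>)"
    by (simp add: p_def k_def B_def)
qed

lemma nn_integral_jacobi_weight_finite:
  assumes "b > 0" and "\<sigma> > 0" and "\<alpha> > -1" and "\<beta> > -1"
  shows "(\<integral>\<^sup>+x. ennreal (jacobi_weight b \<sigma> \<alpha> \<beta> x) * indicator {0..b} x \<partial>lborel) < \<infinity>"
proof -
  define k where "k x = x powr (\<sigma> - 1) * (b powr \<sigma> - x powr \<sigma>) powr \<alpha>" for x
  obtain C1 C2 where "C1 \<ge> 0" "C2 \<ge> 0"
    and bound: "\<And>x. x \<in> {0..b} \<Longrightarrow> jacobi_weight b \<sigma> \<alpha> \<beta> x \<le> C1 * x powr (\<sigma> * \<beta> + \<sigma> - 1) + C2 * k x"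
    using jacobi_weight_le_sum[OF assms(1,2)] unfolding k_def by blast
  have "\<sigma> * (\<beta> + 1) > 0"
    using assms by simp
  then have "((\<lambda>x. C1 * x powr (\<sigma> * \<beta> + \<sigma> - 1) + C2 * k x) has_integral
      C1 * (b powr (\<sigma> * \<beta> + \<sigma>) / (\<sigma> * \<beta> + \<sigma>))
      + C2 * ((b powr \<sigma>) powr (\<alpha> + 1) / (\<sigma> * (\<alpha> + 1)))) {0..b}"
    unfolding k_def using assms has_integral_powr_from_0[of "\<sigma> * \<beta> + \<sigma> - 1" b]
    by (intro has_integral_add has_integral_mult_right has_integral_powr_mult_diff_powr)
      (auto simp: algebra_simps)
  then have "(\<integral>\<^sup>+x. ennreal (C1 * x powr (\<sigma> * \<beta> + \<sigma> - 1) + C2 * k x) * indicator {0..b} x \<partial>lborel) < \<infinity>"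
    using \<open>C1 \<ge> 0\<close> \<open>C2 \<ge> 0\<close> by (subst nn_integral_has_integral_lebesgue') (auto simp: k_def)
  moreover have "(\<integral>\<^sup>+x. ennreal (jacobi_weight b \<sigma> \<alpha> \<beta> x) * indicator {0..b} x \<partial>lborel)
      \<le> (\<integral>\<^sup>+x. ennreal (C1 * x powr (\<sigma> * \<beta> + \<sigma> - 1) + C2 * k x) * indicator {0..b} x \<partial>lborel)"
    using bound by (intro nn_integral_mono) (auto simp: indicator_def intro: ennreal_leI)
  ultimately show ?thesis
    by (simp add: order_le_less_trans)
qed

lemma jacobi_weight_eq_w1:
  "jacobi_weight b \<sigma> \<alpha> \<beta> x = (x powr (\<sigma> * (\<beta> - \<eta> - \<mu>)))\<^sup>2 * (x powr (\<sigma> - 1) * w1 b \<sigma> \<alpha> \<beta> \<mu> \<eta> x)"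
proof -
  have "\<sigma> * \<beta> + \<sigma> - 1 = \<sigma> * (\<beta> - \<eta> - \<mu>) + \<sigma> * (\<beta> - \<eta> - \<mu>) + (\<sigma> - 1) + \<sigma> * (2 * (\<eta> + \<mu>) - \<beta>)"
    by (simp add: algebra_simps)
  then show ?thesis
    unfolding jacobi_weight_def w1_def by (simp only: powr_add power2_eq_square mult_ac)
qed

lemma jacobi_weight_eq_w2:
  "jacobi_weight b \<sigma> \<alpha> \<beta> x
     = (x powr (\<sigma> * \<eta>) * (b powr \<sigma> - x powr \<sigma>) powr \<alpha>)\<^sup>2 * (x powr (\<sigma> - 1) * w2 b \<sigma> \<alpha> \<beta> \<eta> x)"
proof -
  have "\<sigma> * \<beta> + \<sigma> - 1 = \<sigma> * \<eta> + \<sigma> * \<eta> + (\<sigma> - 1) + \<sigma> * (\<beta> - 2 * \<eta>)"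
    by (simp add: algebra_simps)
  then have x_factor: "x powr (\<sigma> * \<beta> + \<sigma> - 1)
      = x powr (\<sigma> * \<eta>) * x powr (\<sigma> * \<eta>) * x powr (\<sigma> - 1) * x powr (\<sigma> * (\<beta> - 2 * \<eta>))"
    by (simp only: powr_add)
  have y_factor: "y powr \<alpha> = y powr \<alpha> * y powr \<alpha> * y powr (- \<alpha>)" for y :: real
    by (simp flip: powr_add)
  show ?thesis
    unfolding jacobi_weight_def w2_def x_factor by (subst y_factor) (simp add: power2_eq_square mult_ac)
qed

lemma continuous_on_jacobi_substitution:
  fixes b \<sigma> :: real
  assumes "b > 0" and "\<sigma> > 0"
  shows "continuous_on {0..b} (\<lambda>x. 2 * (x / b) powr \<sigma> - 1)"
proof -
  have "continuous_on {0..b} (\<lambda>x. (x / b) powr \<sigma>)"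
    using assms by (intro continuous_on_powr') (auto intro!: continuous_intros)
  then show ?thesis
    by (intro continuous_on_diff continuous_on_mult continuous_on_const)
qed

lemma inj_on_jacobi_substitution:
  fixes b \<sigma> :: real
  assumes "b > 0" and "\<sigma> > 0"
  shows "inj_on (\<lambda>x. 2 * (x / b) powr \<sigma> - 1) {0..b}"
proof (rule inj_onI)
  fix x y assume "x \<in> {0..b}" "y \<in> {0..b}" "2 * (x / b) powr \<sigma> - 1 = 2 * (y / b) powr \<sigma> - 1"
  then have "((x / b) powr \<sigma>) powr (1 / \<sigma>) = ((y / b) powr \<sigma>) powr (1 / \<sigma>)"
    by simp
  then show "x = y"
    using assms \<open>x \<in> {0..b}\<close> \<open>y \<in> {0..b}\<close> by (simp add: powr_powr)
qed

lemma complete_in_jacobi_multiplier: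
  fixes m \<omega> :: "real \<Rightarrow> real"
  assumes "b > 0" and "\<sigma> > 0" and "\<alpha> > -1" and "\<beta> > -1"
    and [measurable]: "m \<in> borel_measurable borel" "\<omega> \<in> borel_measurable borel"
    and "\<And>x. 0 < x \<Longrightarrow> x < b \<Longrightarrow> m x \<noteq> 0"
    and weight: "\<And>x. jacobi_weight b \<sigma> \<alpha> \<beta> x = (m x)\<^sup>2 * \<omega> x"
  shows "complete_in b \<omega> (\<lambda>n x. m x * jacobiP \<alpha> \<beta> n (2 * (x / b) powr \<sigma> - 1))"
proof -
  interpret Icc_multiplier b m \<omega>
  proof
    show "(\<integral>\<^sup>+x. ennreal ((m x)\<^sup>2 * \<omega> x) * indicator {0..b} x \<partial>lborel) < \<infinity>"
      using nn_integral_jacobi_weight_finite[OF assms(1-4)] by (simp only: weight)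
  qed (use assms in auto)
  show ?thesis
  proof (rule complete_in_multiplier_polynomial_comp)
    show "\<exists>N c. \<forall>t. p t = (\<Sum>k<N. c k * jacobiP \<alpha> \<beta> k t)" if "polynomial_function p" for p
      using polynomial_function_in_span_jacobiP[of \<alpha> \<beta> p] that assms by fastforce
  qed (use assms continuous_on_jacobi_substitution inj_on_jacobi_substitution polynomial_function_jacobiP
       in auto)
qed

theorem theorem3p5:
  fixes b \<sigma> \<alpha> \<beta> \<mu> \<eta> :: real
  assumes "b > 0" and "\<sigma> > 0" and "\<alpha> > -1" and "\<beta> > -1"
  shows "complete_in b (\<lambda>x. x powr (\<sigma> - 1) * w1 b \<sigma> \<alpha> \<beta> \<mu> \<eta> x) (J1 b \<sigma> \<alpha> \<beta> \<mu> \<eta>)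
       \<and> complete_in b (\<lambda>x. x powr (\<sigma> - 1) * w2 b \<sigma> \<alpha> \<beta> \<eta> x) (J2 b \<sigma> \<alpha> \<beta> \<eta>)"
proof
  show "complete_in b (\<lambda>x. x powr (\<sigma> - 1) * w1 b \<sigma> \<alpha> \<beta> \<mu> \<eta> x) (J1 b \<sigma> \<alpha> \<beta> \<mu> \<eta>)"
    unfolding J1_def using assms
    by (intro complete_in_jacobi_multiplier jacobi_weight_eq_w1) (auto simp: w1_def)
  have "x powr (\<sigma> * \<eta>) * (b powr \<sigma> - x powr \<sigma>) powr \<alpha> \<noteq> 0" if "0 < x" "x < b" for x
    using that assms powr_less_mono2[of \<sigma> x b] by simp
  then show "complete_in b (\<lambda>x. x powr (\<sigma> - 1) * w2 b \<sigma> \<alpha> \<beta> \<eta> x) (J2 b \<sigma> \<alpha> \<beta> \<eta>)"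
    unfolding J2_def using assms
    by (intro complete_in_jacobi_multiplier jacobi_weight_eq_w2) (auto simp: w2_def)
qed

end
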